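(* Let $\mathcal{A}$ be an $(a,0)$-absorbing set with absorbing set graph $\mathcal{G}_{\mathcal{A}}$ and parity-check matrix $H_{\mathcal{A}}$. Run the syndrome-based Gallager-B decoder on $\mathcal{G}_{\mathcal{A}}$ with all variable nodes of $\mathcal{A}$ in error. - If the all-ones vector $\vec{1}$ is in the $\mathbb{F}_2$-rowspace of $H_{\mathcal{A}}$, then $\mathcal{A}$ is not a failure inducing set on $\mathcal{G}_{\mathcal{A}}$: the decoder returns a degenerate error. - If $\vec{1}$ is not in that rowspace, then decoding results in a logical error and $\mathcal{A}$ is a failure inducing set for $\mathcal{G}_{\mathcal{A}}$.
   Context: Tanner graph: a bipartite graph $\mathcal{G}=(V,W;E)$ with variable nodes $V$ and check nodes $W$. Equivalently, a binary parity-check matrix $H$ with rows indexed by $W$ and columns by $V$, where $h_{c,v}=1$ iff $(v,c)\in E$. Notation for a subset $S\subseteq V$: - $\mathcal{N}(S)$ is the set of check nodes adjacent to some vertex of $S$. - $\mathcal{G}_S$ is the subgraph with vertex set $S\cup\mathcal{N}(S)$ and all edges of $\mathcal{G}$ between $S$ and $\mathcal{N}(S)$. - $\mathcal{O}_S$ (resp. $\mathcal{E}_S$) is the set of check nodes of $\mathcal{N}(S)$ having odd (resp. even) degree in $\mathcal{G}_S$. An $(a,b)$-absorbing set is a set $\mathcal{A}\subseteq V$ such that: - $|\mathcal{A}|=a$; - $|\mathcal{O}_{\mathcal{A}}|=b$; - every $v\in\mathcal{A}$ has strictly more neighbours in $\mathcal{E}_{\mathcal{A}}$ than in $\mathcal{O}_{\mathcal{A}}$.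 $\mathcal{G}_{\mathcal{A}}$ is called the absorbing set graph and $H_{\mathcal{A}}$ denotes its parity-check matrix. Syndrome-based Gallager-B decoder on a Tanner graph $\mathcal{G}$: - An error pattern is $e\in\mathbb{F}_2^V$, the indicator of the variable nodes in error. Its input syndrome is $\sigma\in\mathbb{F}_2^W$ with $\sigma_c=\sum_{v\in\mathcal{N}(c)}e_v \bmod 2$. - Initially every variable node sends $0$ on every edge. - In each iteration, each check node $c$ sends to a neighbour $v$ the value $\sigma_c+\sum_{v'\in\mathcal{N}(c)\setminus\{v\}} m_{v'\to c} \pmod 2$, where the $m_{v'\to c}$ are the current variable-to-check messages. - Each variable node $v$ then sends to a neighbour $c$ the majority of the messages it received from its neighbours other than $c$. It sends $0$ on a tie, in particular when $v$ has no other neighbour. - The estimated error $\hat e_v$ is the majority of all incoming check-to-variable messages at $v$, and $0$ on a tie. - The estimated syndrome at $c$ is the mod-2 sum of the variable-to-check messages arriving at $c$. - Before any message passing, all messages are $0$, the estimated syndrome is $\vec 0$ and $\hat e=\vec 0$. - The decoder halts and outputs $\hat e$ as soon as the estimated syndrome equals $\sigma$; otherwise it iterates indefinitely. Decoding failure occurs if either: - the decoder never halts (the estimated syndrome is never eventually equal to $\sigma$, or the estimates fail to converge); or - it halts with $\hat e$ such that $e+\hat e$ is not in the $\mathbb{F}_2$-rowspace of the parity-check matrix of the graph being decoded on (a logical error). Halting with $e+\hat e$ in that rowspace is success (a degenerate error). A set $\mathcal{F}\subseteq V$ is a failure inducing set (for decoding on $\mathcal{G}$) if decoding with $e$ equal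 to the indicator of $\mathcal{F}$, all other variable nodes being correct, results in decoding failure. A nonempty $\mathcal{T}\subseteq V$ is a trapping set if some subset of $\mathcal{T}$ is failure inducing. *)

theory Defs
  imports Main
begin

text \<open>Vectors over F2 indexed by
variable nodes are represented by their supports (subsets of V); F2-addition is
symmetric difference.\<close>

definition tanner_graph :: "'v set \<Rightarrow> 'c set \<Rightarrow> ('v \<times> 'c) set \<Rightarrow> bool" where
  "tanner_graph V W E \<longleftrightarrow> finite V \<and> finite W \<and> E \<subseteq> V \<times> W"

definition vars_at :: "('v \<times> 'c) set \<Rightarrow> 'c \<Rightarrow> 'v set" where
  "vars_at E c = {v. (v, c) \<in> E}"

definition checks_at :: "('v \<times> 'c) set \<Rightarrow> 'v \<Rightarrow> 'c set" where
  "checks_at E v = {c. (v, c) \<in> E}"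

definition nbhd :: "('v \<times> 'c) set \<Rightarrow> 'v set \<Rightarrow> 'c set" where
  "nbhd E S = {c. \<exists>v\<in>S. (v, c) \<in> E}"

definition sub_edges :: "('v \<times> 'c) set \<Rightarrow> 'v set \<Rightarrow> ('v \<times> 'c) set" where
  "sub_edges E S = {(v, c). (v, c) \<in> E \<and> v \<in> S \<and> c \<in> nbhd E S}"

definition odd_checks :: "('v \<times> 'c) set \<Rightarrow> 'v set \<Rightarrow> 'c set" where
  "odd_checks E S = {c \<in> nbhd E S. odd (card (vars_at E c \<inter> S))}"

definition even_checks :: "('v \<times> 'c) set \<Rightarrow> 'v set \<Rightarrow> 'c set" where
  "even_checks E S = {c \<in> nbhd E S. even (card (vars_at E c \<inter> S))}"

definition absorbing_set ::
  "'v set \<Rightarrow> 'c set \<Rightarrow> ('v \<times> 'c) set \<Rightarrow> 'v set \<Rightarrow> nat \<Rightarrow> nat \<Rightarrow> bool" where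
  "absorbing_set V W E A a b \<longleftrightarrow>
     A \<subseteq> V \<and> card A = a \<and> card (odd_checks E A) = b \<and>
     (\<forall>v\<in>A. card (checks_at E v \<inter> odd_checks E A) < card (checks_at E v \<inter> even_checks E A))"

definition symdiff :: "'a set \<Rightarrow> 'a set \<Rightarrow> 'a set" where
  "symdiff X Y = (X - Y) \<union> (Y - X)"

text \<open>Rowspace of the parity-check matrix: x is a sum of rows indexed by some S \<subseteq> W.\<close>
definition in_rowspace :: "'v set \<Rightarrow> 'c set \<Rightarrow> ('v \<times> 'c) set \<Rightarrow> 'v set \<Rightarrow> bool" where
  "in_rowspace V W E x \<longleftrightarrow> x \<subseteq> V \<and>
     (\<exists>S \<subseteq> W. \<forall>v\<in>V. (v \<in> x \<longleftrightarrow> odd (card {c \<in> S. (v, c) \<in> E})))"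

definition syndrome :: "('v \<times> 'c) set \<Rightarrow> 'v set \<Rightarrow> 'c \<Rightarrow> bool" where
  "syndrome E e c = odd (card (vars_at E c \<inter> e))"

text \<open>Majority of bits f x, x \<in> S; 0 (False) on tie or if S is empty.\<close>
definition majority :: "'a set \<Rightarrow> ('a \<Rightarrow> bool) \<Rightarrow> bool" where
  "majority S f \<longleftrightarrow> card S < 2 * card {x \<in> S. f x}"

definition c2v :: "('c \<Rightarrow> bool) \<Rightarrow> ('v \<times> 'c) set \<Rightarrow> ('v \<Rightarrow> 'c \<Rightarrow> bool) \<Rightarrow> 'c \<Rightarrow> 'v \<Rightarrow> bool" where
  "c2v \<sigma> E m c v = (\<sigma> c \<noteq> odd (card {v' \<in> vars_at E c - {v}. m v' c}))"

definition v2c :: "('v \<times> 'c) set \<Rightarrow> ('c \<Rightarrow> 'v \<Rightarrow> bool) \<Rightarrow> 'v \<Rightarrow> 'c \<Rightarrow> bool" where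
  "v2c E r v c = majority (checks_at E v - {c}) (\<lambda>c'. r c' v)"

fun msgs :: "('c \<Rightarrow> bool) \<Rightarrow> ('v \<times> 'c) set \<Rightarrow> nat \<Rightarrow> 'v \<Rightarrow> 'c \<Rightarrow> bool" where
  "msgs \<sigma> E 0 = (\<lambda>v c. False)"
| "msgs \<sigma> E (Suc t) = v2c E (c2v \<sigma> E (msgs \<sigma> E t))"

definition est_error :: "('c \<Rightarrow> bool) \<Rightarrow> ('v \<times> 'c) set \<Rightarrow> nat \<Rightarrow> 'v \<Rightarrow> bool" where
  "est_error \<sigma> E t v =
     (if t = 0 then False
      else majority (checks_at E v) (\<lambda>c. c2v \<sigma> E (msgs \<sigma> E (t - 1)) c v))"

definition est_syndrome :: "('c \<Rightarrow> bool) \<Rightarrow> ('v \<times> 'c) set \<Rightarrow> nat \<Rightarrow> 'c \<Rightarrow> bool" where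
  "est_syndrome \<sigma> E t c = odd (card {v \<in> vars_at E c. msgs \<sigma> E t v c})"

definition halts_at :: "'c set \<Rightarrow> ('v \<times> 'c) set \<Rightarrow> ('c \<Rightarrow> bool) \<Rightarrow> nat \<Rightarrow> bool" where
  "halts_at W E \<sigma> t \<longleftrightarrow> (\<forall>c\<in>W. est_syndrome \<sigma> E t c = \<sigma> c)"

definition decode :: "'v set \<Rightarrow> 'c set \<Rightarrow> ('v \<times> 'c) set \<Rightarrow> ('c \<Rightarrow> bool) \<Rightarrow> 'v set option" where
  "decode V W E \<sigma> =
     (if \<exists>t. halts_at W E \<sigma> t
      then Some {v \<in> V. est_error \<sigma> E (LEAST t. halts_at W E \<sigma> t) v}
      else None)"

definition decoding_failure :: "'v set \<Rightarrow> 'c set \<Rightarrow> ('v \<times> 'c) set \<Rightarrow> 'v set \<Rightarrow> bool" where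
  "decoding_failure V W E e \<longleftrightarrow>
     (case decode V W E (syndrome E e) of
        None \<Rightarrow> True
      | Some eh \<Rightarrow> \<not> in_rowspace V W E (symdiff e eh))"

definition failure_inducing :: "'v set \<Rightarrow> 'c set \<Rightarrow> ('v \<times> 'c) set \<Rightarrow> 'v set \<Rightarrow> bool" where
  "failure_inducing V W E F \<longleftrightarrow> F \<subseteq> V \<and> decoding_failure V W E F"

end

theory Submission
  imports Defs
begin

text \<open>An (a,0)-absorbing set has no odd-degree check in its absorbing set graph, so the
input syndrome of the all-ones error pattern vanishes. The all-zero initial messages already
reproduce it, hence the decoder halts before any message passing with the zero estimate, and
the residual error is the all-ones vector itself: decoding succeeds exactly when that vector
lies in the rowspace.\<close>

lemma vars_at_sub_edges_Int:
  assumes "c \<in> nbhd E S"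
  shows "vars_at (sub_edges E S) c \<inter> S = vars_at E c \<inter> S"
  using assms unfolding vars_at_def sub_edges_def by auto

lemma syndrome_sub_edges_eq_False:
  assumes "c \<in> nbhd E S" and "c \<notin> odd_checks E S"
  shows "\<not> syndrome (sub_edges E S) S c"
  using assms by (simp add: syndrome_def vars_at_sub_edges_Int odd_checks_def)

lemma halts_at_0_iff: "halts_at W E \<sigma> 0 \<longleftrightarrow> (\<forall>c\<in>W. \<not> \<sigma> c)"
  by (auto simp: halts_at_def est_syndrome_def)

lemma decode_zero_syndrome:
  assumes "\<forall>c\<in>W. \<not> \<sigma> c"
  shows "decode V W E \<sigma> = Some {}"
proof -
  have halts: "halts_at W E \<sigma> 0"
    using assms by (simp add: halts_at_0_iff)
  then have "(LEAST t. halts_at W E \<sigma> t) = 0"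
    by (simp add: Least_eq_0)
  with halts show ?thesis
    by (auto simp: decode_def est_error_def)
qed

lemma decoding_failure_iff_not_in_rowspace:
  assumes "decode V W E (syndrome E e) = Some {}"
  shows "decoding_failure V W E e \<longleftrightarrow> \<not> in_rowspace V W E e"
  using assms by (simp add: decoding_failure_def symdiff_def)

lemma finite_nbhd:
  assumes "tanner_graph V W E"
  shows "finite (nbhd E S)"
  using assms unfolding tanner_graph_def nbhd_def by (auto intro: finite_subset)

lemma absorbing_set_odd_checks_empty:
  assumes "tanner_graph V W E" and "absorbing_set V W E A a 0"
  shows "odd_checks E A = {}"
proof -
  have "finite (odd_checks E A)"
    using finite_nbhd[OF assms(1)] by (simp add: odd_checks_def)
  moreover have "card (odd_checks E A) = 0"
    using assms(2) by (simp add: absorbing_set_def)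
  ultimately show ?thesis by simp
qed

lemma decode_absorbing_set_graph:
  assumes "tanner_graph V W E" and "absorbing_set V W E A a 0"
  shows "decode A (nbhd E A) (sub_edges E A) (syndrome (sub_edges E A) A) = Some {}"
proof (rule decode_zero_syndrome)
  show "\<forall>c\<in>nbhd E A. \<not> syndrome (sub_edges E A) A c"
    using absorbing_set_odd_checks_empty[OF assms] by (simp add: syndrome_sub_edges_eq_False)
qed

theorem mainTheorem3:
  fixes V :: "'v set" and W :: "'c set" and E :: "('v \<times> 'c) set"
    and A :: "'v set" and a :: nat
  assumes "tanner_graph V W E"
    and "absorbing_set V W E A a 0"
  shows "(in_rowspace A (nbhd E A) (sub_edges E A) A \<longrightarrow>
            (\<exists>eh. decode A (nbhd E A) (sub_edges E A) (syndrome (sub_edges E A) A) = Some eh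
                 \<and> in_rowspace A (nbhd E A) (sub_edges E A) (symdiff A eh))
            \<and> \<not> failure_inducing A (nbhd E A) (sub_edges E A) A)
       \<and> (\<not> in_rowspace A (nbhd E A) (sub_edges E A) A \<longrightarrow>
            (\<exists>eh. decode A (nbhd E A) (sub_edges E A) (syndrome (sub_edges E A) A) = Some eh
                 \<and> \<not> in_rowspace A (nbhd E A) (sub_edges E A) (symdiff A eh))
            \<and> failure_inducing A (nbhd E A) (sub_edges E A) A)"
proof -
  note decode = decode_absorbing_set_graph[OF assms]
  have "symdiff A {} = A"
    by (simp add: symdiff_def)
  with decode decoding_failure_iff_not_in_rowspace[OF decode] show ?thesis
    by (simp add: failure_inducing_def)
qed

end
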